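(* In any graph $G$, every nice stable set is a strong stable set.
   Context: A stable set is a set of pairwise non-adjacent vertices. A strong stable set is a stable set meeting every maximal (by inclusion) clique of $G$. Contracting vertices $x_1,\dots,x_k$ means deleting them and adding a new vertex adjacent to every remaining vertex that is adjacent to at least one of $x_1,\dots,x_k$. A nice stable set is a maximal (by inclusion) stable set $S$ together with a linear ordering $s_1,\dots,s_k$ of its elements such that for every $i\in\{2,\dots,k\}$, in the graph obtained from $G$ by contracting $s_1,\dots,s_{i-1}$ into a new vertex $w_{i-1}$, there is no induced path on four vertices with endpoints $w_{i-1}$ and $s_i$ (i.e. no chordless path $w_{i-1}$-$a$-$b$-$s_i$). *)

theory Defs
  imports Main
begin

text \<open>A (simple) graph is given by a finite vertex set V and a symmetric,
irreflexive adjacency relation E (only its restriction to V matters).\<close>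

definition graph :: "'a set \<Rightarrow> ('a \<Rightarrow> 'a \<Rightarrow> bool) \<Rightarrow> bool" where
  "graph V E \<longleftrightarrow> finite V \<and> (\<forall>x y. E x y \<longrightarrow> E y x) \<and> (\<forall>x. \<not> E x x)"

definition stable :: "'a set \<Rightarrow> ('a \<Rightarrow> 'a \<Rightarrow> bool) \<Rightarrow> 'a set \<Rightarrow> bool" where
  "stable V E S \<longleftrightarrow> S \<subseteq> V \<and> (\<forall>x\<in>S. \<forall>y\<in>S. \<not> E x y)"

definition maximal_stable :: "'a set \<Rightarrow> ('a \<Rightarrow> 'a \<Rightarrow> bool) \<Rightarrow> 'a set \<Rightarrow> bool" where
  "maximal_stable V E S \<longleftrightarrow> stable V E S \<and> (\<forall>T. stable V E T \<and> S \<subseteq> T \<longrightarrow> T = S)"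

definition clique :: "'a set \<Rightarrow> ('a \<Rightarrow> 'a \<Rightarrow> bool) \<Rightarrow> 'a set \<Rightarrow> bool" where
  "clique V E K \<longleftrightarrow> K \<subseteq> V \<and> (\<forall>x\<in>K. \<forall>y\<in>K. x \<noteq> y \<longrightarrow> E x y)"

definition maximal_clique :: "'a set \<Rightarrow> ('a \<Rightarrow> 'a \<Rightarrow> bool) \<Rightarrow> 'a set \<Rightarrow> bool" where
  "maximal_clique V E K \<longleftrightarrow> clique V E K \<and> (\<forall>L. clique V E L \<and> K \<subseteq> L \<longrightarrow> L = K)"

definition strong_stable :: "'a set \<Rightarrow> ('a \<Rightarrow> 'a \<Rightarrow> bool) \<Rightarrow> 'a set \<Rightarrow> bool" where
  "strong_stable V E S \<longleftrightarrow> stable V E S \<and> (\<forall>K. maximal_clique V E K \<longrightarrow> S \<inter> K \<noteq> {})"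

text \<open>Contracting the vertices of X: delete them and add a new vertex (here None)
adjacent to every remaining vertex adjacent to at least one vertex of X.
Old vertices v are represented as Some v.\<close>

definition contract_V :: "'a set \<Rightarrow> 'a set \<Rightarrow> 'a option set" where
  "contract_V V X = insert None (Some ` (V - X))"

fun contract_E :: "'a set \<Rightarrow> ('a \<Rightarrow> 'a \<Rightarrow> bool) \<Rightarrow> 'a set \<Rightarrow> 'a option \<Rightarrow> 'a option \<Rightarrow> bool" where
  "contract_E V E X (Some u) (Some v) = E u v"
| "contract_E V E X None (Some v) = (v \<in> V - X \<and> (\<exists>x\<in>X. E x v))"
| "contract_E V E X (Some u) None = (u \<in> V - X \<and> (\<exists>x\<in>X. E x u))"
| "contract_E V E X None None = False"

definition induced_P4 :: "'b set \<Rightarrow> ('b \<Rightarrow> 'b \<Rightarrow> bool) \<Rightarrow> 'b \<Rightarrow> 'b \<Rightarrow> bool" where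
  "induced_P4 V E x y \<longleftrightarrow> (\<exists>a b. x \<in> V \<and> a \<in> V \<and> b \<in> V \<and> y \<in> V \<and>
     distinct [x, a, b, y] \<and> E x a \<and> E a b \<and> E b y \<and>
     \<not> E x b \<and> \<not> E a y \<and> \<not> E x y)"

text \<open>A nice stable set: a maximal stable set S with an ordering s (a list
s_1,...,s_k without repetitions) such that for every i in {2..k}, after contracting
s_1..s_(i-1) into w, there is no induced P4 with endpoints w and s_i.
With 0-based list indices: for every i with 1 <= i < k, contract take i s.\<close>

definition nice_stable :: "'a set \<Rightarrow> ('a \<Rightarrow> 'a \<Rightarrow> bool) \<Rightarrow> 'a set \<Rightarrow> 'a list \<Rightarrow> bool" where
  "nice_stable V E S s \<longleftrightarrow> maximal_stable V E S \<and> distinct s \<and> set s = S \<and>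
     (\<forall>i. 1 \<le> i \<and> i < length s \<longrightarrow>
        \<not> induced_P4 (contract_V V (set (take i s))) (contract_E V E (set (take i s)))
             None (Some (s ! i)))"

end

theory Submission
  imports Defs
begin

text \<open>Suppose a maximal clique K misses the nice stable set S = {s_1, ..., s_k}. By maximality
of S every vertex of K has a neighbour in S, so there is a first index i such that
s_1, ..., s_i dominate K. Some b in K is then adjacent to s_i but to none of s_1, ..., s_(i-1),
and by maximality of K some a in K is not adjacent to s_i; a is dominated by s_1, ..., s_(i-1).
After contracting s_1, ..., s_(i-1) into w, the path w-a-b-s_i is an induced P4, which
niceness forbids.\<close>

lemma maximal_stable_dominates:
  assumes "graph V E" "maximal_stable V E S" "v \<in> V" "v \<notin> S"
  shows "\<exists>x\<in>S. E x v"
proof (rule ccontr)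
  assume no_neighbour: "\<not> (\<exists>x\<in>S. E x v)"
  have sym: "\<And>x y. E x y \<Longrightarrow> E y x" and irrefl: "\<And>x. \<not> E x x"
    using assms(1) unfolding graph_def by blast+
  have "stable V E S"
    using assms(2) unfolding maximal_stable_def by blast
  then have "stable V E (insert v S)"
    using assms(3) no_neighbour sym irrefl unfolding stable_def by blast
  with assms(2,4) show False
    unfolding maximal_stable_def by blast
qed

lemma maximal_clique_nonempty:
  assumes "V \<noteq> {}" "maximal_clique V E K"
  shows "K \<noteq> {}"
proof
  assume "K = {}"
  obtain v where "v \<in> V" using assms(1) by blast
  then have "clique V E {v}" unfolding clique_def by auto
  with \<open>K = {}\<close> assms(2) show False unfolding maximal_clique_def by blast
qed

lemma maximal_clique_non_neighbour:
  assumes "graph V E" "maximal_clique V E K" "v \<in> V" "v \<notin> K"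
  shows "\<exists>a\<in>K. \<not> E v a"
proof (rule ccontr)
  assume "\<not> (\<exists>a\<in>K. \<not> E v a)"
  then have adjacent: "\<And>a. a \<in> K \<Longrightarrow> E v a"
    by blast
  have sym: "\<And>x y. E x y \<Longrightarrow> E y x"
    using assms(1) unfolding graph_def by blast
  have "clique V E K"
    using assms(2) unfolding maximal_clique_def by blast
  then have "clique V E (insert v K)"
    using assms(3) adjacent sym unfolding clique_def by blast
  with assms(2,4) show False
    unfolding maximal_clique_def by blast
qed

lemma induced_P4_contract:
  assumes "\<And>v. \<not> E v v"
    and "a \<in> V - X" "b \<in> V - X" "y \<in> V - X"
    and "x \<in> X" "E x a" "\<forall>x\<in>X. \<not> E x b" "\<forall>x\<in>X. \<not> E x y"
    and "E a b" "E b y" "\<not> E a y"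
  shows "induced_P4 (contract_V V X) (contract_E V E X) None (Some y)"
  unfolding induced_P4_def
proof (rule exI[of _ "Some a"], rule exI[of _ "Some b"], intro conjI)
  show "distinct [None, Some a, Some b, Some y]"
    using assms by auto
qed (use assms in \<open>auto simp: contract_V_def\<close>)

lemma nice_stable_meets_maximal_clique:
  assumes "graph V E" "nice_stable V E S s" "maximal_clique V E K" "K \<noteq> {}"
  shows "S \<inter> K \<noteq> {}"
proof
  assume disjoint: "S \<inter> K = {}"
  have ms: "maximal_stable V E S" and "distinct s" and set_s: "set s = S"
    using assms(2) unfolding nice_stable_def by auto
  have sym: "\<And>x y. E x y \<Longrightarrow> E y x" and irrefl: "\<And>v. \<not> E v v"
    using assms(1) unfolding graph_def by blast+
  have SV: "S \<subseteq> V" and S_indep: "\<And>x y. x \<in> S \<Longrightarrow> y \<in> S \<Longrightarrow> \<not> E x y"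
    using ms unfolding maximal_stable_def stable_def by blast+
  have KV: "K \<subseteq> V" and K_adj: "\<And>x y. x \<in> K \<Longrightarrow> y \<in> K \<Longrightarrow> x \<noteq> y \<Longrightarrow> E x y"
    using assms(3) unfolding maximal_clique_def clique_def by blast+
  define dominated where "dominated j \<longleftrightarrow> (\<forall>v\<in>K. \<exists>x\<in>set (take j s). E x v)" for j
  have "dominated (length s)"
    using maximal_stable_dominates[OF assms(1) ms] KV disjoint set_s
    unfolding dominated_def by auto
  moreover have "\<not> dominated 0"
    using assms(4) unfolding dominated_def by auto
  ultimately obtain i where i: "i < length s" "\<not> dominated i" "dominated (Suc i)"
    using ex_least_nat_less by blast
  let ?X = "set (take i s)"
  have take_Suc: "set (take (Suc i) s) = insert (s ! i) ?X"
    using i(1) by (simp add: take_Suc_conv_app_nth)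
  have "distinct (take (Suc i) s)"
    using \<open>distinct s\<close> by simp
  then have si: "s ! i \<in> S" "s ! i \<notin> ?X" "?X \<subseteq> S"
    using i(1) set_s by (auto simp: take_Suc_conv_app_nth dest: in_set_takeD)
  obtain b where b: "b \<in> K" "\<forall>x\<in>?X. \<not> E x b"
    using i(2) unfolding dominated_def by auto
  obtain a where a: "a \<in> K" "\<not> E (s ! i) a"
    using maximal_clique_non_neighbour[OF assms(1,3)] si(1) SV disjoint by blast
  obtain x where x: "x \<in> ?X" "E x a"
    using i(3) a take_Suc unfolding dominated_def by auto
  have "1 \<le> i"
    using x(1) by (cases i) auto
  have "E (s ! i) b"
    using i(3) b take_Suc unfolding dominated_def by auto
  then have b_si: "E b (s ! i)"
    by (rule sym)
  have a_si: "\<not> E a (s ! i)"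
    using a(2) sym by blast
  have ab: "E a b"
    using K_adj a(1) b x by blast
  have outside: "a \<in> V - ?X" "b \<in> V - ?X" "s ! i \<in> V - ?X"
    using a(1) b(1) KV si SV disjoint by auto
  have si_undominated: "\<forall>x\<in>?X. \<not> E x (s ! i)"
    using si S_indep by blast
  have "induced_P4 (contract_V V ?X) (contract_E V E ?X) None (Some (s ! i))"
    using induced_P4_contract[OF irrefl outside x b(2) si_undominated ab b_si a_si] .
  with \<open>1 \<le> i\<close> i(1) assms(2) show False
    unfolding nice_stable_def by blast
qed

theorem lemma3:
  fixes V :: "'a set" and E :: "'a \<Rightarrow> 'a \<Rightarrow> bool" and S :: "'a set" and s :: "'a list"
  assumes "graph V E" and "V \<noteq> {}"
    and "nice_stable V E S s"
  shows "strong_stable V E S"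
  unfolding strong_stable_def
proof (intro conjI allI impI)
  show "stable V E S"
    using assms(3) unfolding nice_stable_def maximal_stable_def by blast
  fix K
  assume "maximal_clique V E K"
  then show "S \<inter> K \<noteq> {}"
    using nice_stable_meets_maximal_clique[OF assms(1,3)] maximal_clique_nonempty[OF assms(2)]
    by blast
qed

end
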